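(* Let $P\in\Omega[y_0,\ldots,y_n]$ be non-zero and let $r(x)=c_0x^{\nu_0}+\cdots+c_kx^{\nu_k}$ be a generalized polynomial ($c_i\ne0$, $\nu_0<\cdots<\nu_k$). Put $P_0=P$, $P_{i+1}=P_i[c_ix^{\nu_i}]$ for $i=0,\ldots,k$, and $Q=P[r(x)]=P_{k+1}$. Then $r(x)$ is admissible for $P$ if and only if the lowest point of $E_{\nu_k}(Q)$ has height (ordinate) greater than or equal to $1$.
   Context: $\Omega$: field of generalized power series $\sum_{i\ge1}c_ix^{\mu_i}$, $c_i\in\mathbb{C}$, $\mu_i\in\mathbb{R}$ strictly increasing, $\mu_i\to\infty$ if infinitely many terms. The operator $'$ is one fixed choice among: (a) $\frac{d}{dx}$ (set $\varepsilon=1$, $[\mu]=\mu$, $T^{\langle e_\kappa\rangle}=T(T-1)\cdots(T-\kappa+1)$); (b) $x\frac{d}{dx}$ ($\varepsilon=0$, $[\mu]=\mu$, $T^{\langle e_\kappa\rangle}=T^\kappa$); (c) $s'(x)=s(qx)$, $\sum c_ix^{\mu_i}\mapsto\sum c_iq^{\mu_i}x^{\mu_i}$, fixed $q\in\mathbb{C}$, $|q|\ne1$ ($\varepsilon=0$, $[\mu]=q^\mu$, $T^{\langle e_\kappa\rangle}=T^\kappa$). For $\rho\in\mathbb{Z}_{\ge0}^{n+1}$: $|\rho|=\sum\rho_\kappa$, $\omega(\rho)=\sum\kappa\rho_\kappa$, $T^{\langle\rho\rangle}=\prod_\kappa (T^{\langle e_\kappa\rangle})^{\rho_\kappa}$,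 $y^\rho=\prod y_\kappa^{\rho_\kappa}$. Full substitution: $P[s]=P(s+y_0,s'+y_1,\ldots,s^{(n)}+y_n)$. Write uniquely $P=\sum_\rho\sum_\alpha P_{(\alpha,\rho)}x^{\alpha+\varepsilon\omega(\rho)}y^\rho$ with $P_{(\alpha,\rho)}\in\mathbb{C}$. Cloud: $\mathcal{C}(P)=\{(\alpha,h): P_{(\alpha,\rho)}\ne0$ for some $|\rho|=h\}$. Newton polygon $\mathcal{N}(P)$: convex hull of $\bigcup_{V\in\mathcal{C}(P)}(V+\mathbb{R}_{\ge0}\times\{0\})$. For $\mu\in\mathbb{R}$, $L_\mu(P)$ is the line $\{\mu h+\alpha=\alpha_0\}$ with $\alpha_0$ minimal such that it meets $\mathcal{N}(P)$, and $E_\mu(P)=L_\mu(P)\cap\mathcal{N}(P)$ (a vertex or a side). Characteristic polynomial: $\Phi_{(P;\mu)}(C)=\sum_{(\alpha,|\rho|)\in E_\mu(P)}P_{(\alpha,\rho)}\,T^{\langle\rho\rangle}|_{T=[\mu]}\,C^{|\rho|}$. $r$ is admissible for $P$ if $\Phi_{(P_i;\nu_i)}(c_i)=0$ for $i=0,\ldots,k$. *)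

theory Defs
  imports "HOL-Analysis.Analysis"
begin

text \<open>A generalized power series sum c_i x^mu_i is represented by its coefficient
function real => complex (coefficient of x^mu).  The support condition (strictly
increasing exponents tending to infinity if infinitely many) is exactly local
finiteness of the support from the left.\<close>

type_synonym gser = "real \<Rightarrow> complex"

definition gps :: "gser \<Rightarrow> bool" where
  "gps f \<longleftrightarrow> (\<forall>b. finite {\<mu>. f \<mu> \<noteq> 0 \<and> \<mu> \<le> b})"

definition gone :: gser where
  "gone = (\<lambda>\<mu>. if \<mu> = 0 then 1 else 0)"

definition gmono :: "complex \<Rightarrow> real \<Rightarrow> gser" where
  "gmono c \<nu> = (\<lambda>\<mu>. if \<mu> = \<nu> then c else 0)"

definition gmult :: "gser \<Rightarrow> gser \<Rightarrow> gser" where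
  "gmult f g = (\<lambda>\<mu>. \<Sum>a\<in>{a. f a \<noteq> 0 \<and> g (\<mu> - a) \<noteq> 0}. f a * g (\<mu> - a))"

fun gpow :: "gser \<Rightarrow> nat \<Rightarrow> gser" where
  "gpow f 0 = gone"
| "gpow f (Suc m) = gmult f (gpow f m)"

datatype dop = Dx | XDx | Qshift complex

definition valid_dop :: "dop \<Rightarrow> bool" where
  "valid_dop D = (case D of Qshift q \<Rightarrow> q \<noteq> 0 \<and> cmod q \<noteq> 1 | _ \<Rightarrow> True)"

definition qpow :: "complex \<Rightarrow> real \<Rightarrow> complex" where
  "qpow q \<mu> = q powr (complex_of_real \<mu>)"

fun dapp :: "dop \<Rightarrow> gser \<Rightarrow> gser" where
  "dapp Dx s = (\<lambda>\<mu>. complex_of_real (\<mu> + 1) * s (\<mu> + 1))"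
| "dapp XDx s = (\<lambda>\<mu>. complex_of_real \<mu> * s \<mu>)"
| "dapp (Qshift q) s = (\<lambda>\<mu>. qpow q \<mu> * s \<mu>)"

definition dnth :: "dop \<Rightarrow> nat \<Rightarrow> gser \<Rightarrow> gser" where
  "dnth D \<kappa> s = (dapp D ^^ \<kappa>) s"

fun deps :: "dop \<Rightarrow> real" where
  "deps Dx = 1"
| "deps XDx = 0"
| "deps (Qshift q) = 0"

fun brk :: "dop \<Rightarrow> real \<Rightarrow> complex" where
  "brk Dx \<mu> = complex_of_real \<mu>"
| "brk XDx \<mu> = complex_of_real \<mu>"
| "brk (Qshift q) \<mu> = qpow q \<mu>"

fun Te :: "dop \<Rightarrow> nat \<Rightarrow> complex \<Rightarrow> complex" where
  "Te Dx \<kappa> T = (\<Prod>j<\<kappa>. T - of_nat j)"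
| "Te XDx \<kappa> T = T ^ \<kappa>"
| "Te (Qshift q) \<kappa> T = T ^ \<kappa>"

text \<open>A multi-index rho in Z_{>=0}^{n+1} is a function nat => nat vanishing beyond n.
A polynomial P is given by its coefficient map rho => (series).\<close>

type_synonym dpoly = "(nat \<Rightarrow> nat) \<Rightarrow> gser"

definition nz :: "gser \<Rightarrow> bool" where
  "nz f \<longleftrightarrow> (\<exists>\<mu>. f \<mu> \<noteq> 0)"

definition valid_dpoly :: "nat \<Rightarrow> dpoly \<Rightarrow> bool" where
  "valid_dpoly n P \<longleftrightarrow> finite {\<rho>. nz (P \<rho>)}
     \<and> (\<forall>\<rho>. gps (P \<rho>))
     \<and> (\<forall>\<rho>. nz (P \<rho>) \<longrightarrow> (\<forall>\<kappa>>n. \<rho> \<kappa> = 0))"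

definition dpoly_nonzero :: "dpoly \<Rightarrow> bool" where
  "dpoly_nonzero P \<longleftrightarrow> (\<exists>\<rho>. nz (P \<rho>))"

definition absr :: "nat \<Rightarrow> (nat \<Rightarrow> nat) \<Rightarrow> nat" where
  "absr n \<rho> = (\<Sum>\<kappa>\<le>n. \<rho> \<kappa>)"

definition omg :: "nat \<Rightarrow> (nat \<Rightarrow> nat) \<Rightarrow> nat" where
  "omg n \<rho> = (\<Sum>\<kappa>\<le>n. \<kappa> * \<rho> \<kappa>)"

definition Trho :: "dop \<Rightarrow> nat \<Rightarrow> (nat \<Rightarrow> nat) \<Rightarrow> complex \<Rightarrow> complex" where
  "Trho D n \<rho> T = (\<Prod>\<kappa>\<le>n. (Te D \<kappa> T) ^ (\<rho> \<kappa>))"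

definition pcoef :: "dop \<Rightarrow> nat \<Rightarrow> dpoly \<Rightarrow> real \<Rightarrow> (nat \<Rightarrow> nat) \<Rightarrow> complex" where
  "pcoef D n P \<alpha> \<rho> = P \<rho> (\<alpha> + deps D * real (omg n \<rho>))"

text \<open>Full substitution P[s] = P(s+y_0, s'+y_1, ..., s^(n)+y_n), expanded binomially:
coefficient of y^sigma is sum_rho P_rho * prod_kappa binom(rho_k, sigma_k) (s^(k))^(rho_k - sigma_k).\<close>
definition subst :: "dop \<Rightarrow> nat \<Rightarrow> dpoly \<Rightarrow> gser \<Rightarrow> dpoly" where
  "subst D n P s = (\<lambda>\<sigma>. if (\<forall>\<kappa>>n. \<sigma> \<kappa> = 0) then
      (\<lambda>\<mu>. \<Sum>\<rho>\<in>{\<rho>. nz (P \<rho>)}.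
         gmult (P \<rho>)
           (foldr (\<lambda>\<kappa> acc. gmult
                (\<lambda>\<nu>. of_nat (\<rho> \<kappa> choose \<sigma> \<kappa>) * gpow (dnth D \<kappa> s) (\<rho> \<kappa> - \<sigma> \<kappa>) \<nu>) acc)
              [0..<Suc n] gone) \<mu>)
    else (\<lambda>\<mu>. 0))"

definition cloud :: "dop \<Rightarrow> nat \<Rightarrow> dpoly \<Rightarrow> (real \<times> real) set" where
  "cloud D n P = {(\<alpha>, real (absr n \<rho>)) | \<alpha> \<rho>. pcoef D n P \<alpha> \<rho> \<noteq> 0}"

definition newton :: "dop \<Rightarrow> nat \<Rightarrow> dpoly \<Rightarrow> (real \<times> real) set" where
  "newton D n P = convex hull (\<Union>V\<in>cloud D n P. {V + (t, 0) | t. t \<ge> 0})"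

text \<open>alpha_0 of the supporting line L_mu(P) = {mu*h + alpha = alpha_0}\<close>
definition Lval :: "dop \<Rightarrow> nat \<Rightarrow> dpoly \<Rightarrow> real \<Rightarrow> real" where
  "Lval D n P \<mu> = Inf ((\<lambda>(\<alpha>, h). \<mu> * h + \<alpha>) ` newton D n P)"

definition Eset :: "dop \<Rightarrow> nat \<Rightarrow> dpoly \<Rightarrow> real \<Rightarrow> (real \<times> real) set" where
  "Eset D n P \<mu> = {(\<alpha>, h) \<in> newton D n P. \<mu> * h + \<alpha> = Lval D n P \<mu>}"

definition charpoly :: "dop \<Rightarrow> nat \<Rightarrow> dpoly \<Rightarrow> real \<Rightarrow> complex \<Rightarrow> complex" where
  "charpoly D n P \<mu> C =
     (\<Sum>(\<alpha>, \<rho>)\<in>{(\<alpha>, \<rho>). (\<alpha>, real (absr n \<rho>)) \<in> Eset D n P \<mu> \<and> pcoef D n P \<alpha> \<rho> \<noteq> 0}.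
        pcoef D n P \<alpha> \<rho> * Trho D n \<rho> (brk D \<mu>) * C ^ (absr n \<rho>))"

fun Pseq :: "dop \<Rightarrow> nat \<Rightarrow> dpoly \<Rightarrow> (nat \<Rightarrow> complex) \<Rightarrow> (nat \<Rightarrow> real) \<Rightarrow> nat \<Rightarrow> dpoly" where
  "Pseq D n P c \<nu> 0 = P"
| "Pseq D n P c \<nu> (Suc i) = subst D n (Pseq D n P c \<nu> i) (gmono (c i) (\<nu> i))"

definition admissible :: "dop \<Rightarrow> nat \<Rightarrow> dpoly \<Rightarrow> nat \<Rightarrow> (nat \<Rightarrow> complex) \<Rightarrow> (nat \<Rightarrow> real) \<Rightarrow> bool" where
  "admissible D n P k c \<nu> \<longleftrightarrow> (\<forall>i\<le>k. charpoly D n (Pseq D n P c \<nu> i) (\<nu> i) (c i) = 0)"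

end

theory Submission
  imports Defs
begin

text \<open>Substituting c x^e into R replaces each term y^\<rho> by terms y^\<sigma> with \<sigma> \<le> \<rho>, moving
  the cloud point (\<alpha>, |\<rho>|) to (\<alpha> + e(|\<rho>| - |\<sigma>|), |\<sigma>|) along a line of slope e.
  Hence L_e(R[c x^e]) = L_e(R), and the coefficient at the foot of this line on the axis
  h = 0 becomes \<Phi>_(R;e)(c).  If that coefficient is nonzero, the foot is a vertex of the
  Newton polygon which later substitutions with larger exponents neither move nor change,
  and which lies on every L_\<mu> with \<mu> \<ge> e.  So r is admissible iff the coefficient at the
  foot of L_\<nu>_k(Q) vanishes, i.e. iff E_\<nu>_k(Q) has no point of height 0; as cloud heights
  are integers, this means that all its points have height at least 1.\<close>

lemma gmult_gmono_left: "gmult (gmono a e) g = (\<lambda>\<mu>. a * g (\<mu> - e))"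
proof
  fix \<mu>
  have "{x. gmono a e x \<noteq> 0 \<and> g (\<mu> - x) \<noteq> 0} = (if a \<noteq> 0 \<and> g (\<mu> - e) \<noteq> 0 then {e} else {})"
    by (auto simp: gmono_def)
  then show "gmult (gmono a e) g \<mu> = a * g (\<mu> - e)"
    by (auto simp: gmult_def gmono_def)
qed

lemma gmult_gmono_right: "gmult f (gmono b e) = (\<lambda>\<mu>. b * f (\<mu> - e))"
proof
  fix \<mu>
  have "{x. f x \<noteq> 0 \<and> gmono b e (\<mu> - x) \<noteq> 0} = (if b \<noteq> 0 \<and> f (\<mu> - e) \<noteq> 0 then {\<mu> - e} else {})"
    by (auto simp: gmono_def)
  then show "gmult f (gmono b e) \<mu> = b * f (\<mu> - e)"
    by (auto simp: gmult_def gmono_def)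
qed

lemma gone_eq_gmono: "gone = gmono 1 0"
  by (simp add: gone_def gmono_def)

lemma gmult_gmono_gmono: "gmult (gmono a e) (gmono b f) = gmono (a * b) (e + f)"
  unfolding gmult_gmono_left by (auto simp: fun_eq_iff gmono_def)

lemma gpow_gmono: "gpow (gmono a e) j = gmono (a ^ j) (real j * e)"
  by (induction j) (simp_all add: gone_eq_gmono gmult_gmono_gmono algebra_simps)

lemma dapp_gmono: "dapp D (gmono a e) = gmono (a * brk D e) (e - deps D)"
  by (cases D) (auto simp: fun_eq_iff gmono_def)

lemma dnth_gmono: "dnth D \<kappa> (gmono c e) = gmono (c * Te D \<kappa> (brk D e)) (e - deps D * real \<kappa>)"
proof (induction \<kappa>)
  case 0
  then show ?case
    by (cases D) (simp_all add: dnth_def)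
next
  case (Suc \<kappa>)
  have "dnth D (Suc \<kappa>) (gmono c e) = dapp D (dnth D \<kappa> (gmono c e))"
    by (simp add: dnth_def)
  also have "\<dots> = gmono (c * Te D \<kappa> (brk D e) * brk D (e - deps D * real \<kappa>))
                          (e - deps D * real \<kappa> - deps D)"
    using Suc by (simp add: dapp_gmono)
  also have "\<dots> = gmono (c * Te D (Suc \<kappa>) (brk D e)) (e - deps D * real (Suc \<kappa>))"
    by (cases D) (simp_all add: algebra_simps qpow_def)
  finally show ?case .
qed

lemma foldr_gmult_gmono:
  "foldr (\<lambda>\<kappa> acc. gmult (gmono (A \<kappa>) (E \<kappa>)) acc) xs gone
     = gmono (\<Prod>\<kappa>\<leftarrow>xs. A \<kappa>) (\<Sum>\<kappa>\<leftarrow>xs. E \<kappa>)"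
  by (induction xs) (simp_all add: gone_eq_gmono gmult_gmono_gmono)

lemma absr_zero [simp]: "absr n (\<lambda>_. 0) = 0"
  by (simp add: absr_def)

lemma absr_mono: "\<forall>\<kappa>\<le>n. \<sigma> \<kappa> \<le> \<rho> \<kappa> \<Longrightarrow> absr n \<sigma> \<le> absr n \<rho>"
  unfolding absr_def by (intro sum_mono) simp

lemma absr_strict_mono:
  assumes "\<forall>\<kappa>\<le>n. \<sigma> \<kappa> \<le> \<rho> \<kappa>" "\<forall>\<kappa>>n. \<sigma> \<kappa> = 0" "\<forall>\<kappa>>n. \<rho> \<kappa> = 0" "\<sigma> \<noteq> \<rho>"
  shows "absr n \<sigma> < absr n \<rho>"
proof -
  obtain \<kappa> where "\<sigma> \<kappa> \<noteq> \<rho> \<kappa>"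
    using assms(4) by blast
  moreover from this have "\<kappa> \<le> n"
    using assms(2,3) not_le by metis
  ultimately have "\<kappa> \<in> {..n}" "\<sigma> \<kappa> < \<rho> \<kappa>"
    using assms(1) by auto
  then show ?thesis
    unfolding absr_def using assms(1) by (intro sum_strict_mono_ex1) auto
qed

lemma absr_eq_0_imp_zero:
  assumes "valid_dpoly n R" "nz (R \<rho>)" "absr n \<rho> = 0"
  shows "\<rho> = (\<lambda>_. 0)"
proof
  fix \<kappa>
  show "\<rho> \<kappa> = 0"
  proof (cases "\<kappa> \<le> n")
    case True
    then show ?thesis
      using assms(3) unfolding absr_def by simp
  next
    case False
    then show ?thesis
      using assms(1,2) unfolding valid_dpoly_def by simp
  qed
qed

lemma finite_pointwise_le:
  assumes "\<forall>\<kappa>>n. \<rho> \<kappa> = 0"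
  shows "finite {\<sigma> :: nat \<Rightarrow> nat. \<forall>\<kappa>. \<sigma> \<kappa> \<le> \<rho> \<kappa>}"
proof (rule finite_subset)
  have bound: "\<rho> \<kappa> \<le> absr n \<rho>" if "\<kappa> \<le> n" for \<kappa>
    unfolding absr_def using that by (intro member_le_sum) auto
  show "{\<sigma>. \<forall>\<kappa>. \<sigma> \<kappa> \<le> \<rho> \<kappa>} \<subseteq>
      {\<sigma>. \<forall>\<kappa>. (\<kappa> \<in> {..n} \<longrightarrow> \<sigma> \<kappa> \<in> {..absr n \<rho>}) \<and> (\<kappa> \<notin> {..n} \<longrightarrow> \<sigma> \<kappa> = 0)}"
  proof (intro subsetI CollectI allI conjI impI)
    fix \<sigma> \<kappa>
    assume "\<sigma> \<in> {\<sigma>. \<forall>\<kappa>. \<sigma> \<kappa> \<le> \<rho> \<kappa>}"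
    then have le: "\<sigma> \<kappa> \<le> \<rho> \<kappa>"
      by blast
    show "\<sigma> \<kappa> \<in> {..absr n \<rho>}" if "\<kappa> \<in> {..n}"
      using le bound that by (meson atMost_iff le_trans)
    show "\<sigma> \<kappa> = 0" if "\<kappa> \<notin> {..n}"
      using le assms that by (metis atMost_iff le_zero_eq not_le)
  qed
  show "finite {\<sigma>. \<forall>\<kappa>. (\<kappa> \<in> {..n} \<longrightarrow> \<sigma> \<kappa> \<in> {..absr n \<rho>}) \<and> (\<kappa> \<notin> {..n} \<longrightarrow> \<sigma> \<kappa> = 0)}"
    by (rule finite_set_of_finite_funs) simp_all
qed

section \<open>Substitution of a monomial\<close>

text \<open>Since (c x^e)^(\<kappa>) = c T^<e_\<kappa>>([e]) x^(e - \<epsilon>\<kappa>), this is the coefficient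
  contributed by the term y^\<rho> of R to y^\<sigma> in R[c x^e].\<close>
definition subst_coef ::
    "dop \<Rightarrow> nat \<Rightarrow> complex \<Rightarrow> real \<Rightarrow> (nat \<Rightarrow> nat) \<Rightarrow> (nat \<Rightarrow> nat) \<Rightarrow> complex" where
  "subst_coef D n c e \<rho> \<sigma> =
     (\<Prod>\<kappa>\<le>n. of_nat (\<rho> \<kappa> choose \<sigma> \<kappa>) * (c * Te D \<kappa> (brk D e)) ^ (\<rho> \<kappa> - \<sigma> \<kappa>))"

lemma subst_coef_nonzero_imp_le:
  "subst_coef D n c e \<rho> \<sigma> \<noteq> 0 \<Longrightarrow> \<kappa> \<le> n \<Longrightarrow> \<sigma> \<kappa> \<le> \<rho> \<kappa>"
  unfolding subst_coef_def
  by (metis (no_types, lifting) atMost_iff binomial_eq_0 finite_atMost mult_eq_0_iff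
      not_le of_nat_eq_0_iff prod_zero_iff)

lemma subst_coef_self [simp]: "subst_coef D n c e \<rho> \<rho> = 1"
  by (simp add: subst_coef_def)

lemma subst_coef_zero: "subst_coef D n c e \<rho> (\<lambda>_. 0) = c ^ absr n \<rho> * Trho D n \<rho> (brk D e)"
  by (simp add: subst_coef_def absr_def Trho_def power_mult_distrib prod.distrib power_sum)

lemma subst_gmono:
  "subst D n R (gmono c e) \<sigma> =
     (if \<forall>\<kappa>>n. \<sigma> \<kappa> = 0 then
        (\<lambda>\<mu>. \<Sum>\<rho>\<in>{\<rho>. nz (R \<rho>)}. subst_coef D n c e \<rho> \<sigma> *
              R \<rho> (\<mu> - (\<Sum>\<kappa>\<le>n. real (\<rho> \<kappa> - \<sigma> \<kappa>) * (e - deps D * real \<kappa>))))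
      else (\<lambda>\<mu>. 0))"
proof -
  have scale: "(\<lambda>\<nu>. k * gmono a f \<nu>) = gmono (k * a) f" for k a f
    by (auto simp: fun_eq_iff gmono_def)
  have "set [0..<Suc n] = {..n}"
    by auto
  then show ?thesis
    unfolding subst_def
    by (simp add: dnth_gmono gpow_gmono scale foldr_gmult_gmono gmult_gmono_right subst_coef_def
        prod.distinct_set_conv_list[symmetric] sum_list_distinct_conv_sum_set del: upt_Suc) auto
qed

lemma nz_subst_imp_vanish: "nz (subst D n R s \<sigma>) \<Longrightarrow> \<forall>\<kappa>>n. \<sigma> \<kappa> = 0"
  unfolding subst_def nz_def by (auto split: if_splits)

lemma pcoef_imp_nz: "pcoef D n R \<alpha> \<rho> \<noteq> 0 \<Longrightarrow> nz (R \<rho>)"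
  unfolding pcoef_def nz_def by blast

lemma pcoef_subst_gmono:
  assumes "\<forall>\<kappa>>n. \<sigma> \<kappa> = 0"
  shows "pcoef D n (subst D n R (gmono c e)) \<alpha> \<sigma> =
    (\<Sum>\<rho>\<in>{\<rho>. nz (R \<rho>)}.
       subst_coef D n c e \<rho> \<sigma> * pcoef D n R (\<alpha> + e * real (absr n \<sigma>) - e * real (absr n \<rho>)) \<rho>)"
proof -
  define shift where "shift \<rho> = (\<Sum>\<kappa>\<le>n. real (\<rho> \<kappa> - \<sigma> \<kappa>) * (e - deps D * real \<kappa>))" for \<rho>
  have shift_eq: "shift \<rho> =
      e * (real (absr n \<rho>) - real (absr n \<sigma>)) - deps D * (real (omg n \<rho>) - real (omg n \<sigma>))"
    if "\<forall>\<kappa>\<le>n. \<sigma> \<kappa> \<le> \<rho> \<kappa>" for \<rho>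
  proof -
    have "shift \<rho> = (\<Sum>\<kappa>\<le>n. e * (real (\<rho> \<kappa>) - real (\<sigma> \<kappa>))
                  - deps D * (real \<kappa> * real (\<rho> \<kappa>) - real \<kappa> * real (\<sigma> \<kappa>)))"
      unfolding shift_def using that by (intro sum.cong) (auto simp: of_nat_diff algebra_simps)
    then show ?thesis
      by (simp add: sum_subtractf sum_distrib_left[symmetric] absr_def omg_def)
  qed
  have summand: "subst_coef D n c e \<rho> \<sigma> * R \<rho> (\<alpha> + deps D * real (omg n \<sigma>) - shift \<rho>) =
      subst_coef D n c e \<rho> \<sigma> * pcoef D n R (\<alpha> + e * real (absr n \<sigma>) - e * real (absr n \<rho>)) \<rho>"
    for \<rho>
  proof (cases "subst_coef D n c e \<rho> \<sigma> = 0")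
    case False
    then have "\<forall>\<kappa>\<le>n. \<sigma> \<kappa> \<le> \<rho> \<kappa>"
      using subst_coef_nonzero_imp_le by blast
    then show ?thesis
      by (simp add: shift_eq pcoef_def algebra_simps)
  qed simp
  have "pcoef D n (subst D n R (gmono c e)) \<alpha> \<sigma> =
      (\<Sum>\<rho>\<in>{\<rho>. nz (R \<rho>)}. subst_coef D n c e \<rho> \<sigma> * R \<rho> (\<alpha> + deps D * real (omg n \<sigma>) - shift \<rho>))"
    using assms by (simp add: pcoef_def subst_gmono shift_def)
  also have "\<dots> = (\<Sum>\<rho>\<in>{\<rho>. nz (R \<rho>)}.
       subst_coef D n c e \<rho> \<sigma> * pcoef D n R (\<alpha> + e * real (absr n \<sigma>) - e * real (absr n \<rho>)) \<rho>)"
    by (rule sum.cong[OF refl summand])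
  finally show ?thesis .
qed

lemma pcoef_subst_gmono_nonzeroE:
  assumes "pcoef D n (subst D n R (gmono c e)) \<alpha> \<sigma> \<noteq> 0"
  obtains \<rho> where "nz (R \<rho>)" "\<forall>\<kappa>\<le>n. \<sigma> \<kappa> \<le> \<rho> \<kappa>" "subst_coef D n c e \<rho> \<sigma> \<noteq> 0"
    "pcoef D n R (\<alpha> + e * real (absr n \<sigma>) - e * real (absr n \<rho>)) \<rho> \<noteq> 0"
proof -
  have vanish: "\<forall>\<kappa>>n. \<sigma> \<kappa> = 0"
    using nz_subst_imp_vanish pcoef_imp_nz[OF assms] by blast
  from assms obtain \<rho> where "\<rho> \<in> {\<rho>. nz (R \<rho>)}"
    "subst_coef D n c e \<rho> \<sigma> * pcoef D n R (\<alpha> + e * real (absr n \<sigma>) - e * real (absr n \<rho>)) \<rho> \<noteq> 0"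
    unfolding pcoef_subst_gmono[OF vanish] using sum.not_neutral_contains_not_neutral by blast
  then show ?thesis
    using that subst_coef_nonzero_imp_le by auto
qed

lemma pcoef_subst_gmono_eq:
  assumes "valid_dpoly n R" "\<forall>\<kappa>>n. \<sigma> \<kappa> = 0"
    and "\<And>\<rho>. nz (R \<rho>) \<Longrightarrow> \<rho> \<noteq> \<sigma> \<Longrightarrow> subst_coef D n c e \<rho> \<sigma> \<noteq> 0 \<Longrightarrow>
           pcoef D n R (\<alpha> + e * real (absr n \<sigma>) - e * real (absr n \<rho>)) \<rho> = 0"
  shows "pcoef D n (subst D n R (gmono c e)) \<alpha> \<sigma> = pcoef D n R \<alpha> \<sigma>"
proof -
  have "finite {\<rho>. nz (R \<rho>)}"
    using assms(1) unfolding valid_dpoly_def by blast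
  have "pcoef D n (subst D n R (gmono c e)) \<alpha> \<sigma> =
      (\<Sum>\<rho>\<in>{\<rho>. nz (R \<rho>)}. if \<rho> = \<sigma> then pcoef D n R \<alpha> \<sigma> else 0)"
    unfolding pcoef_subst_gmono[OF assms(2)] using assms(3) by (intro sum.cong) auto
  also have "\<dots> = pcoef D n R \<alpha> \<sigma>"
    using \<open>finite {\<rho>. nz (R \<rho>)}\<close> by (simp add: sum.delta') (metis pcoef_imp_nz)
  finally show ?thesis .
qed

section \<open>Left-finite sets of exponents\<close>

definition left_finite :: "real set \<Rightarrow> bool" where
  "left_finite V \<longleftrightarrow> (\<forall>b. finite {v \<in> V. v \<le> b})"

lemma gps_iff_left_finite: "gps f \<longleftrightarrow> left_finite {\<mu>. f \<mu> \<noteq> 0}"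
  by (simp add: gps_def left_finite_def)

lemma left_finite_subset:
  assumes "W \<subseteq> V" "left_finite V"
  shows "left_finite W"
  unfolding left_finite_def
proof
  fix b
  have "{w \<in> W. w \<le> b} \<subseteq> {v \<in> V. v \<le> b}"
    using assms(1) by blast
  then show "finite {w \<in> W. w \<le> b}"
    using assms(2) finite_subset unfolding left_finite_def by blast
qed

lemma left_finite_translate: "left_finite V \<Longrightarrow> left_finite ((\<lambda>v. v + d) ` V)"
proof (unfold left_finite_def, intro allI)
  fix b
  assume "\<forall>b. finite {v \<in> V. v \<le> b}"
  then have "finite ((\<lambda>v. v + d) ` {v \<in> V. v \<le> b - d})"
    by blast
  moreover have "{w \<in> (\<lambda>v. v + d) ` V. w \<le> b} = (\<lambda>v. v + d) ` {v \<in> V. v \<le> b - d}"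
    by auto
  ultimately show "finite {w \<in> (\<lambda>v. v + d) ` V. w \<le> b}"
    by simp
qed

lemma left_finite_UN:
  assumes "finite I" "\<And>i. i \<in> I \<Longrightarrow> left_finite (V i)"
  shows "left_finite (\<Union>i\<in>I. V i)"
  unfolding left_finite_def
proof
  fix b
  have "{v \<in> (\<Union>i\<in>I. V i). v \<le> b} = (\<Union>i\<in>I. {v \<in> V i. v \<le> b})"
    by blast
  then show "finite {v \<in> (\<Union>i\<in>I. V i). v \<le> b}"
    using assms unfolding left_finite_def by simp
qed

lemma left_finite_has_min:
  assumes "left_finite V" "v \<in> V"
  obtains m where "m \<in> V" "\<forall>w\<in>V. m \<le> w"
proof -
  let ?W = "{w \<in> V. w \<le> v}"
  have "finite ?W" "v \<in> ?W"
    using assms unfolding left_finite_def by auto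
  then have "Min ?W \<in> ?W"
    using Min_in by blast
  moreover have "Min ?W \<le> w" if "w \<in> V" for w
  proof (cases "w \<le> v")
    case True
    with \<open>finite ?W\<close> that show ?thesis
      by simp
  next
    case False
    with \<open>finite ?W\<close> \<open>v \<in> ?W\<close> show ?thesis
      by (meson Min_le less_le_not_le nle_le order_trans)
  qed
  ultimately show ?thesis
    using that by blast
qed

lemma finite_support_subst_gmono:
  assumes "valid_dpoly n R"
  shows "finite {\<sigma>. nz (subst D n R (gmono c e) \<sigma>)}"
proof (rule finite_subset)
  let ?S = "{\<rho>. nz (R \<rho>)}"
  have vanish: "\<And>\<rho>. \<rho> \<in> ?S \<Longrightarrow> \<forall>\<kappa>>n. \<rho> \<kappa> = 0"
    using assms unfolding valid_dpoly_def by blast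
  then show "finite (\<Union>\<rho>\<in>?S. {\<sigma>. \<forall>\<kappa>. \<sigma> \<kappa> \<le> \<rho> \<kappa>})"
    using assms finite_pointwise_le unfolding valid_dpoly_def by blast
  show "{\<sigma>. nz (subst D n R (gmono c e) \<sigma>)} \<subseteq> (\<Union>\<rho>\<in>?S. {\<sigma>. \<forall>\<kappa>. \<sigma> \<kappa> \<le> \<rho> \<kappa>})"
  proof
    fix \<sigma>
    assume "\<sigma> \<in> {\<sigma>. nz (subst D n R (gmono c e) \<sigma>)}"
    then obtain \<mu> where "pcoef D n (subst D n R (gmono c e)) (\<mu> - deps D * real (omg n \<sigma>)) \<sigma> \<noteq> 0"
        and \<sigma>_vanish: "\<forall>\<kappa>>n. \<sigma> \<kappa> = 0"
      using nz_subst_imp_vanish by (fastforce simp: nz_def pcoef_def)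
    then obtain \<rho> where "\<rho> \<in> ?S" "\<forall>\<kappa>\<le>n. \<sigma> \<kappa> \<le> \<rho> \<kappa>"
      by (auto elim: pcoef_subst_gmono_nonzeroE)
    moreover from this have "\<forall>\<kappa>. \<sigma> \<kappa> \<le> \<rho> \<kappa>"
      using \<sigma>_vanish by (metis le0 not_le)
    ultimately show "\<sigma> \<in> (\<Union>\<rho>\<in>?S. {\<sigma>. \<forall>\<kappa>. \<sigma> \<kappa> \<le> \<rho> \<kappa>})"
      by blast
  qed
qed

lemma gps_subst_gmono:
  assumes "valid_dpoly n R"
  shows "gps (subst D n R (gmono c e) \<sigma>)"
proof -
  let ?Q = "subst D n R (gmono c e)"
  let ?S = "{\<rho>. nz (R \<rho>)}"
  define d where "d \<rho> = e * real (absr n \<rho>) - e * real (absr n \<sigma>)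
                        + deps D * real (omg n \<sigma>) - deps D * real (omg n \<rho>)" for \<rho>
  have "{\<mu>. ?Q \<sigma> \<mu> \<noteq> 0} \<subseteq> (\<Union>\<rho>\<in>?S. (\<lambda>x. x + d \<rho>) ` {x. R \<rho> x \<noteq> 0})"
  proof
    fix \<mu>
    assume "\<mu> \<in> {\<mu>. ?Q \<sigma> \<mu> \<noteq> 0}"
    then have "pcoef D n ?Q (\<mu> - deps D * real (omg n \<sigma>)) \<sigma> \<noteq> 0"
      by (simp add: pcoef_def)
    then obtain \<rho> where "\<rho> \<in> ?S" and
        "pcoef D n R (\<mu> - deps D * real (omg n \<sigma>) + e * real (absr n \<sigma>) - e * real (absr n \<rho>)) \<rho> \<noteq> 0"
      by (auto elim: pcoef_subst_gmono_nonzeroE)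
    moreover from this(2) have "R \<rho> (\<mu> - d \<rho>) \<noteq> 0"
      by (simp add: pcoef_def d_def algebra_simps)
    ultimately show "\<mu> \<in> (\<Union>\<rho>\<in>?S. (\<lambda>x. x + d \<rho>) ` {x. R \<rho> x \<noteq> 0})"
      by (intro UN_I image_eqI[of _ _ "\<mu> - d \<rho>"]) auto
  qed
  moreover have "left_finite (\<Union>\<rho>\<in>?S. (\<lambda>x. x + d \<rho>) ` {x. R \<rho> x \<noteq> 0})"
    using assms unfolding valid_dpoly_def
    by (intro left_finite_UN left_finite_translate) (simp_all add: gps_iff_left_finite)
  ultimately show ?thesis
    unfolding gps_iff_left_finite by (rule left_finite_subset)
qed

lemma valid_dpoly_subst_gmono:
  "valid_dpoly n R \<Longrightarrow> valid_dpoly n (subst D n R (gmono c e))"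
  unfolding valid_dpoly_def[of n "subst D n R (gmono c e)"]
  using finite_support_subst_gmono gps_subst_gmono nz_subst_imp_vanish by blast

section \<open>The lowest line of a given slope\<close>

definition cloud_min :: "dop \<Rightarrow> nat \<Rightarrow> dpoly \<Rightarrow> real \<Rightarrow> real \<Rightarrow> bool" where
  "cloud_min D n R \<mu> m \<longleftrightarrow>
     (\<exists>\<alpha> \<rho>. pcoef D n R \<alpha> \<rho> \<noteq> 0 \<and> \<mu> * real (absr n \<rho>) + \<alpha> = m) \<and>
     (\<forall>\<alpha> \<rho>. pcoef D n R \<alpha> \<rho> \<noteq> 0 \<longrightarrow> m \<le> \<mu> * real (absr n \<rho>) + \<alpha>)"

lemma cloud_min_imp_nonzero: "cloud_min D n R \<mu> m \<Longrightarrow> dpoly_nonzero R"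
  unfolding cloud_min_def dpoly_nonzero_def using pcoef_imp_nz by blast

lemma cloud_min_exists:
  assumes "valid_dpoly n R" "dpoly_nonzero R"
  obtains m where "cloud_min D n R \<mu> m"
proof -
  let ?S = "{\<rho>. nz (R \<rho>)}"
  define V where "V = {\<mu> * real (absr n \<rho>) + \<alpha> | \<alpha> \<rho>. pcoef D n R \<alpha> \<rho> \<noteq> 0}"
  define d where "d \<rho> = \<mu> * real (absr n \<rho>) - deps D * real (omg n \<rho>)" for \<rho>
  have "V \<subseteq> (\<Union>\<rho>\<in>?S. (\<lambda>x. x + d \<rho>) ` {x. R \<rho> x \<noteq> 0})"
  proof
    fix v
    assume "v \<in> V"
    then obtain \<alpha> \<rho> where "v = \<mu> * real (absr n \<rho>) + \<alpha>" "pcoef D n R \<alpha> \<rho> \<noteq> 0"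
      unfolding V_def by blast
    then show "v \<in> (\<Union>\<rho>\<in>?S. (\<lambda>x. x + d \<rho>) ` {x. R \<rho> x \<noteq> 0})"
      using pcoef_imp_nz
      by (intro UN_I image_eqI[of _ _ "\<alpha> + deps D * real (omg n \<rho>)"]) (auto simp: d_def pcoef_def)
  qed
  moreover have "left_finite (\<Union>\<rho>\<in>?S. (\<lambda>x. x + d \<rho>) ` {x. R \<rho> x \<noteq> 0})"
    using assms(1) unfolding valid_dpoly_def
    by (intro left_finite_UN left_finite_translate) (simp_all add: gps_iff_left_finite)
  ultimately have "left_finite V"
    by (rule left_finite_subset)
  moreover obtain \<rho> x where "R \<rho> x \<noteq> 0"
    using assms(2) unfolding dpoly_nonzero_def nz_def by blast
  then have "\<mu> * real (absr n \<rho>) + (x - deps D * real (omg n \<rho>)) \<in> V"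
    unfolding V_def pcoef_def by force
  ultimately obtain m where "m \<in> V" "\<forall>v\<in>V. m \<le> v"
    by (rule left_finite_has_min)
  then have "cloud_min D n R \<mu> m"
    unfolding cloud_min_def V_def by blast
  then show ?thesis
    by (rule that)
qed

lemma cloud_min_le_subst_gmono:
  assumes "cloud_min D n R \<mu> m" "\<mu> \<le> e" "pcoef D n (subst D n R (gmono c e)) \<alpha> \<sigma> \<noteq> 0"
  shows "m \<le> \<mu> * real (absr n \<sigma>) + \<alpha>"
proof -
  obtain \<rho> where le: "\<forall>\<kappa>\<le>n. \<sigma> \<kappa> \<le> \<rho> \<kappa>"
    and "pcoef D n R (\<alpha> + e * real (absr n \<sigma>) - e * real (absr n \<rho>)) \<rho> \<noteq> 0"
    using assms(3) by (rule pcoef_subst_gmono_nonzeroE)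
  then have "m \<le> \<mu> * real (absr n \<rho>) + (\<alpha> + e * real (absr n \<sigma>) - e * real (absr n \<rho>))"
    using assms(1) unfolding cloud_min_def by blast
  moreover have "0 \<le> (e - \<mu>) * (real (absr n \<rho>) - real (absr n \<sigma>))"
    using absr_mono[OF le] assms(2) by simp
  ultimately show ?thesis
    by (simp add: algebra_simps)
qed

text \<open>The point of the lowest face of slope e with the greatest height keeps its
  coefficient, since every other contribution to it would come from a higher point on the
  same line.\<close>
lemma cloud_min_subst_gmono:
  assumes valid: "valid_dpoly n R" and min: "cloud_min D n R e m"
  shows "cloud_min D n (subst D n R (gmono c e)) e m"
proof -
  define H where "H = {\<rho>. \<exists>\<alpha>. pcoef D n R \<alpha> \<rho> \<noteq> 0 \<and> e * real (absr n \<rho>) + \<alpha> = m}"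
  have "H \<subseteq> {\<rho>. nz (R \<rho>)}"
    unfolding H_def using pcoef_imp_nz by blast
  then have "finite H"
    using valid unfolding valid_dpoly_def by (blast intro: finite_subset)
  moreover have "H \<noteq> {}"
    using min unfolding cloud_min_def H_def by blast
  ultimately have "Max (absr n ` H) \<in> absr n ` H"
    by (intro Max_in) auto
  then obtain \<rho>\<^sub>0 where "\<rho>\<^sub>0 \<in> H" "absr n \<rho>\<^sub>0 = Max (absr n ` H)"
    by (metis imageE)
  with \<open>finite H\<close> have highest: "absr n \<rho> \<le> absr n \<rho>\<^sub>0" if "\<rho> \<in> H" for \<rho>
    using that by simp
  define \<alpha>\<^sub>0 where "\<alpha>\<^sub>0 = m - e * real (absr n \<rho>\<^sub>0)"
  have "pcoef D n R \<alpha>\<^sub>0 \<rho>\<^sub>0 \<noteq> 0"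
    using \<open>\<rho>\<^sub>0 \<in> H\<close> unfolding H_def \<alpha>\<^sub>0_def by (auto simp: algebra_simps)
  have vanish: "\<And>\<rho>. nz (R \<rho>) \<Longrightarrow> \<forall>\<kappa>>n. \<rho> \<kappa> = 0"
    using valid unfolding valid_dpoly_def by blast
  have "pcoef D n (subst D n R (gmono c e)) \<alpha>\<^sub>0 \<rho>\<^sub>0 = pcoef D n R \<alpha>\<^sub>0 \<rho>\<^sub>0"
  proof (rule pcoef_subst_gmono_eq[OF valid])
    show "\<forall>\<kappa>>n. \<rho>\<^sub>0 \<kappa> = 0"
      using \<open>pcoef D n R \<alpha>\<^sub>0 \<rho>\<^sub>0 \<noteq> 0\<close> pcoef_imp_nz vanish by blast
    fix \<rho>
    assume "nz (R \<rho>)" "\<rho> \<noteq> \<rho>\<^sub>0" "subst_coef D n c e \<rho> \<rho>\<^sub>0 \<noteq> 0"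
    then have "absr n \<rho>\<^sub>0 < absr n \<rho>"
      using \<open>\<forall>\<kappa>>n. \<rho>\<^sub>0 \<kappa> = 0\<close> vanish subst_coef_nonzero_imp_le by (blast intro: absr_strict_mono)
    then have "\<rho> \<notin> H"
      using highest by fastforce
    then show "pcoef D n R (\<alpha>\<^sub>0 + e * real (absr n \<rho>\<^sub>0) - e * real (absr n \<rho>)) \<rho> = 0"
      unfolding H_def \<alpha>\<^sub>0_def by auto
  qed
  with \<open>pcoef D n R \<alpha>\<^sub>0 \<rho>\<^sub>0 \<noteq> 0\<close> have "pcoef D n (subst D n R (gmono c e)) \<alpha>\<^sub>0 \<rho>\<^sub>0 \<noteq> 0"
    by simp
  then show ?thesis
    unfolding cloud_min_def \<alpha>\<^sub>0_def using cloud_min_le_subst_gmono[OF min order_refl] by force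
qed

lemma pcoef_subst_gmono_axis:
  assumes valid: "valid_dpoly n R" and min: "cloud_min D n R \<mu> m" and "\<mu> < e"
  shows "pcoef D n (subst D n R (gmono c e)) m (\<lambda>_. 0) = pcoef D n R m (\<lambda>_. 0)"
proof (rule pcoef_subst_gmono_eq[OF valid])
  fix \<rho>
  assume "nz (R \<rho>)" "\<rho> \<noteq> (\<lambda>_. 0)"
  then have "0 < absr n \<rho>"
    using absr_eq_0_imp_zero[OF valid] by blast
  then have "\<mu> * real (absr n \<rho>) + (m - e * real (absr n \<rho>)) < m"
    using \<open>\<mu> < e\<close> by (simp add: algebra_simps)
  then show "pcoef D n R (m + e * real (absr n (\<lambda>_. 0)) - e * real (absr n \<rho>)) \<rho> = 0"
    using min unfolding cloud_min_def by force
qed simp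

lemma cloud_min_axis_mono:
  assumes "cloud_min D n R \<mu> m" "pcoef D n R m (\<lambda>_. 0) \<noteq> 0" "\<mu> \<le> \<mu>'"
  shows "cloud_min D n R \<mu>' m"
proof -
  have "m \<le> \<mu>' * real (absr n \<rho>) + \<alpha>" if "pcoef D n R \<alpha> \<rho> \<noteq> 0" for \<alpha> \<rho>
  proof -
    have "m \<le> \<mu> * real (absr n \<rho>) + \<alpha>"
      using assms(1) that unfolding cloud_min_def by blast
    moreover have "\<mu> * real (absr n \<rho>) \<le> \<mu>' * real (absr n \<rho>)"
      using assms(3) by (simp add: mult_right_mono)
    ultimately show ?thesis
      by simp
  qed
  then show ?thesis
    unfolding cloud_min_def using assms(2) by force
qed

lemma dpoly_nonzero_subst_gmono:
  assumes "valid_dpoly n R" "dpoly_nonzero R"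
  shows "dpoly_nonzero (subst D n R (gmono c e))"
proof -
  obtain m where "cloud_min D n R e m"
    using cloud_min_exists[OF assms] .
  then show ?thesis
    using assms(1) by (blast intro: cloud_min_subst_gmono cloud_min_imp_nonzero)
qed

lemma valid_dpoly_Pseq: "valid_dpoly n P \<Longrightarrow> valid_dpoly n (Pseq D n P c \<nu> i)"
  by (induction i) (simp_all add: valid_dpoly_subst_gmono)

lemma dpoly_nonzero_Pseq:
  "valid_dpoly n P \<Longrightarrow> dpoly_nonzero P \<Longrightarrow> dpoly_nonzero (Pseq D n P c \<nu> i)"
  by (induction i) (simp_all add: dpoly_nonzero_subst_gmono valid_dpoly_Pseq)

section \<open>The Newton polygon\<close>

lemma convex_above_line:
  "convex {p :: real \<times> real. 0 \<le> snd p \<and> m \<le> \<mu> * snd p + fst p \<and> (\<mu> * snd p + fst p = m \<longrightarrow> h \<le> snd p)}"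
  (is "convex ?K")
proof (rule convexI)
  fix x y :: "real \<times> real" and u v :: real
  assume x: "x \<in> ?K" and y: "y \<in> ?K" and "0 \<le> u" "0 \<le> v" "u + v = 1"
  define \<phi> where "\<phi> p = \<mu> * snd p + fst p" for p :: "real \<times> real"
  let ?z = "u *\<^sub>R x + v *\<^sub>R y"
  have x0: "0 \<le> snd x" and x1: "m \<le> \<phi> x" and x2: "\<phi> x = m \<Longrightarrow> h \<le> snd x"
    using x unfolding \<phi>_def by auto
  have y0: "0 \<le> snd y" and y1: "m \<le> \<phi> y" and y2: "\<phi> y = m \<Longrightarrow> h \<le> snd y"
    using y unfolding \<phi>_def by auto
  have snd_z: "snd ?z = u * snd x + v * snd y"
    by simp
  have lin: "\<phi> ?z - m = u * (\<phi> x - m) + v * (\<phi> y - m)"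
  proof -
    have v: "v = 1 - u"
      using \<open>u + v = 1\<close> by simp
    show ?thesis
      unfolding v by (simp add: \<phi>_def algebra_simps)
  qed
  have nonneg: "0 \<le> u * (\<phi> x - m)" "0 \<le> v * (\<phi> y - m)"
    using x1 y1 \<open>0 \<le> u\<close> \<open>0 \<le> v\<close> by simp_all
  have "h \<le> snd ?z" if "\<phi> ?z = m"
  proof -
    have "u * (\<phi> x - m) = 0" "v * (\<phi> y - m) = 0"
      using that lin nonneg by linarith+
    then have "u = 0 \<or> h \<le> snd x" "v = 0 \<or> h \<le> snd y"
      using x2 y2 by auto
    then have "u * h \<le> u * snd x" "v * h \<le> v * snd y"
      using \<open>0 \<le> u\<close> \<open>0 \<le> v\<close> by (auto intro: mult_left_mono)
    moreover have "h = u * h + v * h"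
      using \<open>u + v = 1\<close> by (metis distrib_right mult_1)
    ultimately show ?thesis
      unfolding snd_z by linarith
  qed
  moreover have "m \<le> \<phi> ?z"
    using lin nonneg by linarith
  moreover have "0 \<le> snd ?z"
    unfolding snd_z using x0 y0 \<open>0 \<le> u\<close> \<open>0 \<le> v\<close> by (intro add_nonneg_nonneg mult_nonneg_nonneg)
  ultimately show "?z \<in> ?K"
    unfolding \<phi>_def by blast
qed

lemma cloud_point_in_newton:
  assumes "pcoef D n R \<alpha> \<rho> \<noteq> 0"
  shows "(\<alpha>, real (absr n \<rho>)) \<in> newton D n R"
proof -
  have "(\<alpha>, real (absr n \<rho>)) \<in> cloud D n R"
    unfolding cloud_def using assms by blast
  then have "(\<alpha>, real (absr n \<rho>)) \<in> (\<Union>V\<in>cloud D n R. {V + (t, 0) | t. t \<ge> 0})"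
    by force
  then show ?thesis
    unfolding newton_def by (rule hull_inc)
qed

lemma newton_above_line:
  assumes "cloud_min D n R \<mu> m"
    and "\<And>\<alpha> \<rho>. pcoef D n R \<alpha> \<rho> \<noteq> 0 \<Longrightarrow> \<mu> * real (absr n \<rho>) + \<alpha> = m \<Longrightarrow> h \<le> real (absr n \<rho>)"
  shows "newton D n R \<subseteq>
    {p. 0 \<le> snd p \<and> m \<le> \<mu> * snd p + fst p \<and> (\<mu> * snd p + fst p = m \<longrightarrow> h \<le> snd p)}"
  unfolding newton_def
proof (rule hull_minimal)
  show "convex {p. 0 \<le> snd p \<and> m \<le> \<mu> * snd p + fst p \<and> (\<mu> * snd p + fst p = m \<longrightarrow> h \<le> snd p)}"
    by (rule convex_above_line)
  show "(\<Union>V\<in>cloud D n R. {V + (t, 0) | t. t \<ge> 0}) \<subseteq>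
    {p. 0 \<le> snd p \<and> m \<le> \<mu> * snd p + fst p \<and> (\<mu> * snd p + fst p = m \<longrightarrow> h \<le> snd p)}"
  proof
    fix p
    assume "p \<in> (\<Union>V\<in>cloud D n R. {V + (t, 0) | t. t \<ge> 0})"
    then obtain \<alpha> \<rho> t where p: "p = (\<alpha> + t, real (absr n \<rho>))" "0 \<le> t" "pcoef D n R \<alpha> \<rho> \<noteq> 0"
      unfolding cloud_def by auto
    then have "m \<le> \<mu> * real (absr n \<rho>) + \<alpha>"
      using assms(1) unfolding cloud_min_def by blast
    with p assms(2)[OF p(3)] show "p \<in>
        {p. 0 \<le> snd p \<and> m \<le> \<mu> * snd p + fst p \<and> (\<mu> * snd p + fst p = m \<longrightarrow> h \<le> snd p)}"
      by auto
  qed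
qed

lemma Lval_cloud_min:
  assumes "cloud_min D n R \<mu> m"
  shows "Lval D n R \<mu> = m"
  unfolding Lval_def
proof (rule cInf_eq_minimum)
  obtain \<alpha> \<rho> where "pcoef D n R \<alpha> \<rho> \<noteq> 0" "\<mu> * real (absr n \<rho>) + \<alpha> = m"
    using assms unfolding cloud_min_def by blast
  then show "m \<in> (\<lambda>(\<alpha>, h). \<mu> * h + \<alpha>) ` newton D n R"
    using cloud_point_in_newton by force
  show "m \<le> x" if "x \<in> (\<lambda>(\<alpha>, h). \<mu> * h + \<alpha>) ` newton D n R" for x
    using that newton_above_line[OF assms, of 0] by auto
qed

lemma Eset_cloud_min:
  "cloud_min D n R \<mu> m \<Longrightarrow> Eset D n R \<mu> = {(\<alpha>, h) \<in> newton D n R. \<mu> * h + \<alpha> = m}"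
  unfolding Eset_def by (simp add: Lval_cloud_min)

definition axis_coef :: "dop \<Rightarrow> nat \<Rightarrow> dpoly \<Rightarrow> real \<Rightarrow> complex" where
  "axis_coef D n R \<mu> = pcoef D n R (Lval D n R \<mu>) (\<lambda>_. 0)"

lemma Eset_height_ge_one_iff:
  assumes valid: "valid_dpoly n R" and "dpoly_nonzero R"
  shows "1 \<le> Inf (snd ` Eset D n R \<mu>) \<longleftrightarrow> axis_coef D n R \<mu> = 0"
proof -
  obtain m where min: "cloud_min D n R \<mu> m"
    using cloud_min_exists[OF assms] .
  have E: "Eset D n R \<mu> = {(\<alpha>, h) \<in> newton D n R. \<mu> * h + \<alpha> = m}"
    by (rule Eset_cloud_min[OF min])
  show ?thesis
  proof
    assume "1 \<le> Inf (snd ` Eset D n R \<mu>)"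
    show "axis_coef D n R \<mu> = 0"
    proof (rule ccontr)
      assume "axis_coef D n R \<mu> \<noteq> 0"
      then have "(m, 0) \<in> Eset D n R \<mu>"
        using cloud_point_in_newton unfolding axis_coef_def Lval_cloud_min[OF min] E by force
      moreover have "bdd_below (snd ` Eset D n R \<mu>)"
        unfolding E using newton_above_line[OF min, of 0] by (intro bdd_belowI[of _ 0]) auto
      ultimately have "Inf (snd ` Eset D n R \<mu>) \<le> 0"
        by (metis cInf_lower image_eqI snd_conv)
      with \<open>1 \<le> Inf (snd ` Eset D n R \<mu>)\<close> show False
        by simp
    qed
  next
    assume "axis_coef D n R \<mu> = 0"
    then have "pcoef D n R m (\<lambda>_. 0) = 0"
      unfolding axis_coef_def Lval_cloud_min[OF min] .
    then have "1 \<le> real (absr n \<rho>)" if "pcoef D n R \<alpha> \<rho> \<noteq> 0" "\<mu> * real (absr n \<rho>) + \<alpha> = m" for \<alpha> \<rho>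
      using that absr_eq_0_imp_zero[OF valid pcoef_imp_nz[OF that(1)]] by fastforce
    then have "1 \<le> h" if "h \<in> snd ` Eset D n R \<mu>" for h
      using that newton_above_line[OF min, of 1] unfolding E by auto
    moreover obtain \<alpha> \<rho> where "pcoef D n R \<alpha> \<rho> \<noteq> 0" "\<mu> * real (absr n \<rho>) + \<alpha> = m"
      using min unfolding cloud_min_def by blast
    then have "snd ` Eset D n R \<mu> \<noteq> {}"
      unfolding E using cloud_point_in_newton by force
    ultimately show "1 \<le> Inf (snd ` Eset D n R \<mu>)"
      by (intro cInf_greatest)
  qed
qed

lemma charpoly_cloud_min:
  assumes valid: "valid_dpoly n R" and min: "cloud_min D n R \<mu> m"
  shows "charpoly D n R \<mu> C = (\<Sum>\<rho>\<in>{\<rho>. nz (R \<rho>)}.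
      pcoef D n R (m - \<mu> * real (absr n \<rho>)) \<rho> * Trho D n \<rho> (brk D \<mu>) * C ^ absr n \<rho>)"
proof -
  let ?\<alpha> = "\<lambda>\<rho>. m - \<mu> * real (absr n \<rho>)"
  let ?f = "\<lambda>\<alpha> \<rho>. pcoef D n R \<alpha> \<rho> * Trho D n \<rho> (brk D \<mu>) * C ^ absr n \<rho>"
  let ?S' = "{\<rho>. pcoef D n R (?\<alpha> \<rho>) \<rho> \<noteq> 0}"
  have "{(\<alpha>, \<rho>). (\<alpha>, real (absr n \<rho>)) \<in> Eset D n R \<mu> \<and> pcoef D n R \<alpha> \<rho> \<noteq> 0}
      = (\<lambda>\<rho>. (?\<alpha> \<rho>, \<rho>)) ` ?S'"
    unfolding Eset_cloud_min[OF min] by (force intro: cloud_point_in_newton)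
  then have "charpoly D n R \<mu> C = (\<Sum>\<rho>\<in>?S'. ?f (?\<alpha> \<rho>) \<rho>)"
    unfolding charpoly_def by (simp add: sum.reindex inj_on_def)
  also have "\<dots> = (\<Sum>\<rho>\<in>{\<rho>. nz (R \<rho>)}. ?f (?\<alpha> \<rho>) \<rho>)"
    using valid pcoef_imp_nz unfolding valid_dpoly_def by (intro sum.mono_neutral_left) auto
  finally show ?thesis .
qed

lemma axis_coef_subst_gmono:
  assumes valid: "valid_dpoly n R" and "dpoly_nonzero R"
  shows "axis_coef D n (subst D n R (gmono c e)) e = charpoly D n R e c"
proof -
  obtain m where min: "cloud_min D n R e m"
    using cloud_min_exists[OF assms] .
  have "axis_coef D n (subst D n R (gmono c e)) e = pcoef D n (subst D n R (gmono c e)) m (\<lambda>_. 0)"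
    unfolding axis_coef_def Lval_cloud_min[OF cloud_min_subst_gmono[OF valid min]] ..
  also have "\<dots> = (\<Sum>\<rho>\<in>{\<rho>. nz (R \<rho>)}.
      subst_coef D n c e \<rho> (\<lambda>_. 0) * pcoef D n R (m - e * real (absr n \<rho>)) \<rho>)"
    using pcoef_subst_gmono[of n "\<lambda>_. 0" D R c e m] by simp
  also have "\<dots> = charpoly D n R e c"
    unfolding charpoly_cloud_min[OF valid min] by (intro sum.cong) (simp_all add: subst_coef_zero)
  finally show ?thesis .
qed

lemma axis_coef_subst_gmono_persists:
  assumes valid: "valid_dpoly n R" and "dpoly_nonzero R"
    and "\<mu> < e" and nonzero: "axis_coef D n R \<mu> \<noteq> 0"
  shows "axis_coef D n (subst D n R (gmono c e)) e = axis_coef D n R \<mu>"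
proof -
  let ?Q = "subst D n R (gmono c e)"
  obtain m where min: "cloud_min D n R \<mu> m"
    using cloud_min_exists[OF valid \<open>dpoly_nonzero R\<close>] .
  have axis: "pcoef D n ?Q m (\<lambda>_. 0) = pcoef D n R m (\<lambda>_. 0)"
    using pcoef_subst_gmono_axis[OF valid min \<open>\<mu> < e\<close>] .
  with nonzero have Q_axis: "pcoef D n ?Q m (\<lambda>_. 0) \<noteq> 0"
    unfolding axis_coef_def Lval_cloud_min[OF min] by simp
  then have "pcoef D n ?Q m (\<lambda>_. 0) \<noteq> 0 \<and> \<mu> * real (absr n (\<lambda>_. 0)) + m = m"
    by simp
  then have "cloud_min D n ?Q \<mu> m"
    unfolding cloud_min_def using cloud_min_le_subst_gmono[OF min less_imp_le[OF \<open>\<mu> < e\<close>]]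
    by blast
  then have Q_min: "cloud_min D n ?Q e m"
    using Q_axis less_imp_le[OF \<open>\<mu> < e\<close>] by (rule cloud_min_axis_mono)
  show ?thesis
    unfolding axis_coef_def Lval_cloud_min[OF min] Lval_cloud_min[OF Q_min] by (rule axis)
qed

lemma all_atMost_iff_last:
  assumes "\<And>i. i < k \<Longrightarrow> Z (Suc i) \<Longrightarrow> Z i"
  shows "(\<forall>i\<le>k. Z i) \<longleftrightarrow> Z k"
proof
  assume "Z k"
  show "\<forall>i\<le>k. Z i"
  proof (intro allI impI)
    fix i
    assume "i \<le> k"
    then show "Z i"
      using \<open>Z k\<close> by (induction rule: inc_induct) (auto intro: assms)
  qed
qed simp

theorem lemma4:
  fixes D :: dop and n k :: nat and P :: dpoly
    and c :: "nat \<Rightarrow> complex" and \<nu> :: "nat \<Rightarrow> real"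
  assumes "valid_dop D"
    and "valid_dpoly n P"
    and "dpoly_nonzero P"
    and "\<forall>i\<le>k. c i \<noteq> 0"
    and "\<forall>i<k. \<nu> i < \<nu> (Suc i)"
  shows "admissible D n P k c \<nu> \<longleftrightarrow>
           Inf (snd ` Eset D n (Pseq D n P c \<nu> (Suc k)) (\<nu> k)) \<ge> 1"
proof -
  let ?P = "Pseq D n P c \<nu>"
  have valid: "valid_dpoly n (?P i)" and nonzero: "dpoly_nonzero (?P i)" for i
    using assms(2,3) by (simp_all add: valid_dpoly_Pseq dpoly_nonzero_Pseq)
  define Z where "Z i \<longleftrightarrow> axis_coef D n (?P (Suc i)) (\<nu> i) = 0" for i
  have charpoly_iff: "charpoly D n (?P i) (\<nu> i) (c i) = 0 \<longleftrightarrow> Z i" for i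
    unfolding Z_def by (simp add: axis_coef_subst_gmono[OF valid nonzero])
  have "Z i" if "i < k" "Z (Suc i)" for i
  proof (rule ccontr)
    assume "\<not> Z i"
    then have "axis_coef D n (?P (Suc (Suc i))) (\<nu> (Suc i)) = axis_coef D n (?P (Suc i)) (\<nu> i)"
      using axis_coef_subst_gmono_persists[OF valid[of "Suc i"] nonzero[of "Suc i"],
          where D = D and \<mu> = "\<nu> i" and e = "\<nu> (Suc i)" and c = "c (Suc i)"]
        assms(5) \<open>i < k\<close> unfolding Z_def by simp
    with \<open>\<not> Z i\<close> \<open>Z (Suc i)\<close> show False
      unfolding Z_def by simp
  qed
  then have "admissible D n P k c \<nu> \<longleftrightarrow> Z k"
    unfolding admissible_def charpoly_iff by (rule all_atMost_iff_last)
  also have "\<dots> \<longleftrightarrow> 1 \<le> Inf (snd ` Eset D n (?P (Suc k)) (\<nu> k))"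
    unfolding Z_def by (rule Eset_height_ge_one_iff[OF valid nonzero, symmetric])
  finally show ?thesis .
qed

end
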